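(* Let $\mu$ be a probability distribution on $Q_d$ and let $X\in Q_d$ with $|X|=k\ge1$ and $P_1(X,\mathbf 0)>\frac12$. Let $I=\{i: x_i=1\}$. Then there exists $i\in I$ with \[ w_i^0<\begin{cases}\frac34-\frac1{4k} & \text{if $k$ is odd},\\[2pt] \frac34-\frac1{2k} & \text{if $k$ is even}.\end{cases} \]
   Context: $Q_d=\{0,1\}^d$ with the Hamming distance $d(X,Y)=|\{i: x_i\neq y_i\}|$; $|X|$ is the number of coordinates of $X$ equal to $1$. A probability distribution on $Q_d$ is a function $\mu:Q_d\to\mathbb R_{\ge0}$ with $\sum_{V\in Q_d}\mu(V)=1$, extended to subsets by $\mu(\mathcal A)=\sum_{V\in\mathcal A}\mu(V)$. For $A,B\in Q_d$ let $V(A,B)=\{Z\in Q_d: d(Z,A)<d(Z,B)\}$ and $T(A,B)=\{Z\in Q_d: d(Z,A)=d(Z,B)\}$, and $P_1(A,B)=\mu(V(A,B))+\frac12\mu(T(A,B))$. For $i\in[d]$, $w_i^0=\mu(\{Z\in Q_d: z_i=0\})$. $\mathbf 0=(0,\dots,0)$. *)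

theory Defs
  imports Complex_Main
begin

text \<open>The hypercube Q_d: 0/1 vectors of length d, represented as bool lists
  (True = 1). Coordinates are indexed by 0..d-1.\<close>
definition cube :: "nat \<Rightarrow> bool list set" where
  "cube d = {X. length X = d}"

definition hdist :: "bool list \<Rightarrow> bool list \<Rightarrow> nat" where
  "hdist X Y = card {i. i < length X \<and> X ! i \<noteq> Y ! i}"

definition weight :: "bool list \<Rightarrow> nat" where
  "weight X = card {i. i < length X \<and> X ! i}"

definition zero_vec :: "nat \<Rightarrow> bool list" where
  "zero_vec d = replicate d False"

definition is_distribution :: "nat \<Rightarrow> (bool list \<Rightarrow> real) \<Rightarrow> bool" where
  "is_distribution d \<mu> \<longleftrightarrow> (\<forall>V\<in>cube d. \<mu> V \<ge> 0) \<and> (\<Sum>V\<in>cube d. \<mu> V) = 1"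

definition meas :: "(bool list \<Rightarrow> real) \<Rightarrow> bool list set \<Rightarrow> real" where
  "meas \<mu> A = (\<Sum>V\<in>A. \<mu> V)"

definition vor :: "nat \<Rightarrow> bool list \<Rightarrow> bool list \<Rightarrow> bool list set" where
  "vor d A B = {Z\<in>cube d. hdist Z A < hdist Z B}"

definition tie :: "nat \<Rightarrow> bool list \<Rightarrow> bool list \<Rightarrow> bool list set" where
  "tie d A B = {Z\<in>cube d. hdist Z A = hdist Z B}"

definition P1 :: "nat \<Rightarrow> (bool list \<Rightarrow> real) \<Rightarrow> bool list \<Rightarrow> bool list \<Rightarrow> real" where
  "P1 d \<mu> A B = meas \<mu> (vor d A B) + meas \<mu> (tie d A B) / 2"

definition w0 :: "nat \<Rightarrow> (bool list \<Rightarrow> real) \<Rightarrow> nat \<Rightarrow> real" where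
  "w0 d \<mu> i = meas \<mu> {Z\<in>cube d. \<not> Z ! i}"

end

theory Submission
  imports Defs
begin

text \<open>Let \<open>N(Z)\<close> be the number of coordinates in \<open>I\<close> where \<open>Z\<close> is 1. Then \<open>Z\<close> is closer
  to \<open>X\<close> than to \<open>\<zero>\<close> iff \<open>2N(Z) > k\<close> and equidistant iff \<open>2N(Z) = k\<close>, so \<open>P\<^sub>1(X,\<zero>)\<close> is the
  expectation of a step function of \<open>N\<close>. That step function lies below the line through the
  origin with slope \<open>2/(k+1)\<close> (\<open>k\<close> odd) resp. \<open>2/(k+2)\<close> (\<open>k\<close> even), and
  \<open>E[N] = \<Sum>\<^sub>i\<^sub>\<in>\<^sub>I (1 - w\<^sub>i\<^sup>0)\<close>. If every \<open>w\<^sub>i\<^sup>0\<close> reached the bound, this would give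
  \<open>P\<^sub>1(X,\<zero>) \<le> 1/2\<close>.\<close>

lemma finite_cube: "finite (cube d)"
proof -
  have "cube d = {xs. set xs \<subseteq> (UNIV::bool set) \<and> length xs = d}"
    by (auto simp: cube_def)
  thus ?thesis using finite_lists_length_eq[of "UNIV::bool set" d] by simp
qed

definition common_ones :: "bool list \<Rightarrow> bool list \<Rightarrow> nat" where
  "common_ones X Z = card {i. i < length X \<and> X ! i \<and> Z ! i}"

lemma common_ones_add_card_zeros:
  "common_ones X Z + card {i. i < length X \<and> X ! i \<and> \<not> Z ! i} = weight X"
proof -
  have "{i. i < length X \<and> X ! i} =
      {i. i < length X \<and> X ! i \<and> Z ! i} \<union> {i. i < length X \<and> X ! i \<and> \<not> Z ! i}"
    by auto
  then show ?thesis
    unfolding common_ones_def weight_def by (subst card_Un_disjoint[symmetric]) auto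
qed

lemma hdist_add_common_ones:
  assumes "length Z = d" "length X = d"
  shows "hdist Z X + 2 * common_ones X Z = hdist Z (zero_vec d) + weight X"
proof -
  let ?P = "{i. i < d \<and> Z ! i \<and> \<not> X ! i}"
  let ?Q = "{i. i < d \<and> X ! i \<and> \<not> Z ! i}"
  let ?R = "{i. i < d \<and> X ! i \<and> Z ! i}"
  have "{i. i < length Z \<and> Z ! i \<noteq> X ! i} = ?P \<union> ?Q" using assms by auto
  then have "hdist Z X = card ?P + card ?Q"
    unfolding hdist_def by (subst card_Un_disjoint[symmetric]) auto
  moreover have "{i. i < length Z \<and> Z ! i \<noteq> zero_vec d ! i} = ?P \<union> ?R"
    using assms by (auto simp: zero_vec_def)
  then have "hdist Z (zero_vec d) = card ?P + card ?R"
    unfolding hdist_def by (subst card_Un_disjoint[symmetric]) auto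
  moreover have "common_ones X Z + card ?Q = weight X" "common_ones X Z = card ?R"
    using common_ones_add_card_zeros[of X Z] assms by (simp_all add: common_ones_def)
  ultimately show ?thesis by linarith
qed

definition win_share :: "nat \<Rightarrow> nat \<Rightarrow> real" where
  "win_share k n = (if k < 2 * n then 1 else if k = 2 * n then 1/2 else 0)"

lemma P1_zero_vec_eq_sum:
  assumes "X \<in> cube d"
  shows "P1 d \<mu> X (zero_vec d) = (\<Sum>Z\<in>cube d. \<mu> Z * win_share (weight X) (common_ones X Z))"
proof -
  let ?k = "weight X" and ?N = "common_ones X"
  have closer: "hdist Z X < hdist Z (zero_vec d) \<longleftrightarrow> ?k < 2 * ?N Z"
    and equal: "hdist Z X = hdist Z (zero_vec d) \<longleftrightarrow> ?k = 2 * ?N Z" if "Z \<in> cube d" for Z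
    using hdist_add_common_ones[of Z d X] that assms by (auto simp: cube_def)
  have "meas \<mu> (vor d X (zero_vec d)) = (\<Sum>Z\<in>cube d. if ?k < 2 * ?N Z then \<mu> Z else 0)"
    unfolding meas_def vor_def using closer
    by (simp add: sum.inter_filter[OF finite_cube, symmetric]) (intro sum.cong; auto)
  moreover have "meas \<mu> (tie d X (zero_vec d)) = (\<Sum>Z\<in>cube d. if ?k = 2 * ?N Z then \<mu> Z else 0)"
    unfolding meas_def tie_def using equal
    by (simp add: sum.inter_filter[OF finite_cube, symmetric]) (intro sum.cong; auto)
  ultimately have "P1 d \<mu> X (zero_vec d) =
      (\<Sum>Z\<in>cube d. (if ?k < 2 * ?N Z then \<mu> Z else 0) + (if ?k = 2 * ?N Z then \<mu> Z else 0) / 2)"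
    unfolding P1_def by (simp add: sum_divide_distrib sum.distrib)
  also have "\<dots> = (\<Sum>Z\<in>cube d. \<mu> Z * win_share ?k (?N Z))"
    by (rule sum.cong) (auto simp: win_share_def)
  finally show ?thesis .
qed

definition win_slope :: "nat \<Rightarrow> real" where
  "win_slope k = (if odd k then 2 / (real k + 1) else 2 / (real k + 2))"

lemma win_share_le_linear:
  assumes "k \<ge> 1"
  shows "win_share k n \<le> win_slope k * real n"
proof (cases "odd k")
  case True
  then obtain j where "k = 2 * j + 1" by (metis oddE)
  then show ?thesis using True
    by (auto simp: win_share_def win_slope_def field_simps)
next
  case False
  then obtain j where "k = 2 * j" by (metis evenE)
  with assms have "j \<ge> 1" by simp
  with \<open>k = 2 * j\<close> show ?thesis using False
    by (auto simp: win_share_def win_slope_def field_simps)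
qed

lemma sum_common_ones_eq:
  assumes "X \<in> cube d"
  shows "(\<Sum>Z\<in>cube d. \<mu> Z * real (common_ones X Z)) =
    (\<Sum>i\<in>{i. i < d \<and> X ! i}. meas \<mu> {Z\<in>cube d. Z ! i})"
proof -
  let ?I = "{i. i < d \<and> X ! i}"
  have "real (common_ones X Z) = (\<Sum>i\<in>?I. of_bool (Z ! i))" for Z
    using assms by (simp add: common_ones_def cube_def Collect_conj_eq[symmetric] conj_assoc)
  then have "(\<Sum>Z\<in>cube d. \<mu> Z * real (common_ones X Z)) =
      (\<Sum>Z\<in>cube d. \<Sum>i\<in>?I. \<mu> Z * of_bool (Z ! i))"
    by (simp only: sum_distrib_left)
  also have "\<dots> = (\<Sum>i\<in>?I. \<Sum>Z\<in>cube d. \<mu> Z * of_bool (Z ! i))"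
    by (rule sum.swap)
  also have "\<dots> = (\<Sum>i\<in>?I. meas \<mu> {Z\<in>cube d. Z ! i})"
    unfolding meas_def by (simp add: sum_mult_of_bool_eq[OF finite_cube] Int_def conj_commute)
  finally show ?thesis .
qed

lemma meas_ones_add_w0:
  assumes "is_distribution d \<mu>"
  shows "meas \<mu> {Z\<in>cube d. Z ! i} + w0 d \<mu> i = 1"
proof -
  have "meas \<mu> {Z\<in>cube d. Z ! i} + w0 d \<mu> i =
      (\<Sum>Z\<in>cube d. (if Z ! i then \<mu> Z else 0) + (if \<not> Z ! i then \<mu> Z else 0))"
    unfolding w0_def meas_def sum.inter_filter[OF finite_cube] sum.distrib ..
  also have "\<dots> = (\<Sum>Z\<in>cube d. \<mu> Z)" by (rule sum.cong) simp_all
  finally show ?thesis using assms by (simp add: is_distribution_def)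
qed

lemma P1_zero_vec_le_w0_sum:
  assumes "is_distribution d \<mu>" "X \<in> cube d" "weight X \<ge> 1"
  shows "P1 d \<mu> X (zero_vec d) \<le>
    win_slope (weight X) * (\<Sum>i\<in>{i. i < d \<and> X ! i}. 1 - w0 d \<mu> i)"
proof -
  let ?k = "weight X"
  have "P1 d \<mu> X (zero_vec d) \<le> (\<Sum>Z\<in>cube d. win_slope ?k * (\<mu> Z * real (common_ones X Z)))"
    unfolding P1_zero_vec_eq_sum[OF assms(2)]
  proof (rule sum_mono)
    fix Z assume "Z \<in> cube d"
    with assms(1) have "\<mu> Z \<ge> 0" by (simp add: is_distribution_def)
    from mult_left_mono[OF win_share_le_linear[OF assms(3)] this]
    show "\<mu> Z * win_share ?k (common_ones X Z) \<le> win_slope ?k * (\<mu> Z * real (common_ones X Z))"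
      by (metis mult.left_commute)
  qed
  also have "\<dots> = win_slope ?k * (\<Sum>Z\<in>cube d. \<mu> Z * real (common_ones X Z))"
    by (simp add: sum_distrib_left)
  also have "(\<Sum>Z\<in>cube d. \<mu> Z * real (common_ones X Z)) = (\<Sum>i\<in>{i. i < d \<and> X ! i}. 1 - w0 d \<mu> i)"
    unfolding sum_common_ones_eq[OF assms(2)]
    using meas_ones_add_w0[OF assms(1)] by (intro sum.cong refl) (simp add: eq_diff_eq)
  finally show ?thesis .
qed

definition w0_bound :: "nat \<Rightarrow> real" where
  "w0_bound k = (if odd k then 3/4 - 1/(4 * real k) else 3/4 - 1/(2 * real k))"

lemma win_slope_mult_w0_bound:
  assumes "k \<ge> 1"
  shows "win_slope k * (real k * (1 - w0_bound k)) = 1/2"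
proof -
  have "real k \<noteq> 0" using assms by simp
  then have "real k * (1 - (3/4 - 1/(4 * real k))) = (real k + 1) / 4"
    "real k * (1 - (3/4 - 1/(2 * real k))) = (real k + 2) / 4"
    by (simp_all add: field_simps)
  then show ?thesis by (simp add: win_slope_def w0_bound_def)
qed

theorem mainTheorem3:
  fixes d k :: nat and \<mu> :: "bool list \<Rightarrow> real" and X :: "bool list"
  assumes "is_distribution d \<mu>"
    and "X \<in> cube d"
    and "weight X = k" and "k \<ge> 1"
    and "P1 d \<mu> X (zero_vec d) > 1/2"
  shows "\<exists>i<d. X ! i \<and>
           w0 d \<mu> i < (if odd k then 3/4 - 1/(4 * real k) else 3/4 - 1/(2 * real k))"
  unfolding w0_bound_def[symmetric]
proof (rule ccontr)
  let ?I = "{i. i < d \<and> X ! i}"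
  assume "\<not> (\<exists>i<d. X ! i \<and> w0 d \<mu> i < w0_bound k)"
  then have "w0_bound k \<le> w0 d \<mu> i" if "i \<in> ?I" for i
    using that by auto
  moreover have "card ?I = k" using assms(2,3) by (simp add: weight_def cube_def)
  ultimately have "(\<Sum>i\<in>?I. 1 - w0 d \<mu> i) \<le> real k * (1 - w0_bound k)"
    using sum_mono[of ?I "\<lambda>i. 1 - w0 d \<mu> i" "\<lambda>_. 1 - w0_bound k"] by simp
  moreover have "0 \<le> win_slope k" by (simp add: win_slope_def)
  ultimately have "P1 d \<mu> X (zero_vec d) \<le> win_slope k * (real k * (1 - w0_bound k))"
    using P1_zero_vec_le_w0_sum[OF assms(1,2)] assms(3,4) by (auto intro: order.trans mult_left_mono)
  also have "\<dots> = 1/2" using win_slope_mult_w0_bound[OF assms(4)] .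
  finally show False using assms(5) by simp
qed

end
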